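(* Let $A\subseteq\mathbb{R}^d$ ($d\ge2$) be a nonempty compact set and $s\in[0,d)$. If the support content $\mathcal S^s_{d-1}(A)=\lim_{\varepsilon\to0^+}\varepsilon^{s-(d-1)}\mu_{d-1}(A_\varepsilon)$ exists in $[0,\infty)$, then the outer Minkowski content $\mathcal M^s_{\mathrm{out}}(A)=\lim_{\varepsilon\to0^+}\varepsilon^{s-d}V(A_\varepsilon\setminus A)$ exists and $$\mathcal M^s_{\mathrm{out}}(A)=\frac{2}{d-s}\,\mathcal S^s_{d-1}(A).$$
   Context: $V$ is $d$-dimensional Lebesgue measure, $\omega_k=\frac{k\pi^{k/2}}{\Gamma(k/2+1)}$, $A_\varepsilon=\{x:\mathrm{dist}(x,A)\le\varepsilon\}$. Normal bundle of a closed set $C$: $\mathrm{Unp}(C)$ is the set of $y\notin C$ with a unique nearest point $\pi_C(y)\in C$; $N(C)=\{(\pi_C(y),(y-\pi_C(y))/\mathrm{dist}(y,C)):y\in\mathrm{Unp}(C)\}$; local reach $\delta(C,x,u)=\sup\{t\ge0:\pi_C(x+tu)=x\}$. Support measures (Hug–Last–Weil): for closed $C$, the signed measures $\mu_i(C;\cdot)$, $i=0,\dots,d-1$, on $N(C)$ such that $\int_{N(C)}\mathbb 1\{x\in B\}\min\{r,\delta(C,x,u)\}^{d-i}|\mu_i|(C;d(x,u))<\infty$ for compact $B$, $r>0$, and for every measurable compactly supported $f$, $\int_{\mathbb{R}^d\setminus C}f=\sum_{i=0}^{d-1}\omega_{d-i}\int_0^\infty\int_{N(C)}t^{d-i-1}\mathbb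 1\{t<\delta(C,x,u)\}f(x+tu)\mu_i(C;d(x,u))dt$. Write $\mu_{d-1}(A_\varepsilon)=\mu_{d-1}(A_\varepsilon;N(A_\varepsilon))$ for the total mass. *)

theory Defs
  imports "HOL-Analysis.Analysis"
begin

definition omega :: "nat \<Rightarrow> real" where
  "omega k = real k * pi powr (real k / 2) / Gamma (real k / 2 + 1)"

definition parset :: "'a::euclidean_space set \<Rightarrow> real \<Rightarrow> 'a set" where
  "parset A e = {x. infdist x A \<le> e}"

definition unique_nearest :: "'a::euclidean_space set \<Rightarrow> 'a \<Rightarrow> 'a \<Rightarrow> bool" where
  "unique_nearest C y x \<longleftrightarrow> x \<in> C \<and> (\<forall>z\<in>C. z \<noteq> x \<longrightarrow> dist y x < dist y z)"

definition Unp :: "'a::euclidean_space set \<Rightarrow> 'a set" where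
  "Unp C = {y. y \<notin> C \<and> (\<exists>x. unique_nearest C y x)}"

definition proj :: "'a::euclidean_space set \<Rightarrow> 'a \<Rightarrow> 'a" where
  "proj C y = (THE x. unique_nearest C y x)"

definition normal_bundle :: "'a::euclidean_space set \<Rightarrow> ('a \<times> 'a) set" where
  "normal_bundle C = (\<lambda>y. (proj C y, (1 / infdist y C) *\<^sub>R (y - proj C y))) ` Unp C"

definition local_reach :: "'a::euclidean_space set \<Rightarrow> 'a \<Rightarrow> 'a \<Rightarrow> ereal" where
  "local_reach C x u = (SUP t\<in>{t. t \<ge> 0 \<and> unique_nearest C (x + t *\<^sub>R u) x}. ereal t)"

text \<open>A signed measure on N(C) is represented by its Jordan decomposition (M+, M-):
  two mutually singular Borel measures on R^d x R^d, both concentrated on N(C).\<close>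
definition signed_on :: "('a::euclidean_space \<times> 'a) set \<Rightarrow> ('a \<times> 'a) measure \<times> ('a \<times> 'a) measure \<Rightarrow> bool" where
  "signed_on N m \<longleftrightarrow>
     sets (fst m) = sets borel \<and> sets (snd m) = sets borel \<and>
     (AE p in fst m. p \<in> N) \<and> (AE p in snd m. p \<in> N) \<and>
     (\<exists>S\<in>sets borel. emeasure (fst m) S = 0 \<and> emeasure (snd m) (UNIV - S) = 0)"

definition sint :: "('a::euclidean_space \<times> 'a) measure \<times> ('a \<times> 'a) measure \<Rightarrow> ('a \<times> 'a \<Rightarrow> real) \<Rightarrow> real" where
  "sint m f = (\<integral>p. f p \<partial>(fst m)) - (\<integral>p. f p \<partial>(snd m))"

definition tv_nn_int :: "('a::euclidean_space \<times> 'a) measure \<times> ('a \<times> 'a) measure \<Rightarrow> ('a \<times> 'a \<Rightarrow> ennreal) \<Rightarrow> ennreal" where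
  "tv_nn_int m f = (\<integral>\<^sup>+p. f p \<partial>(fst m)) + (\<integral>\<^sup>+p. f p \<partial>(snd m))"

definition support_measures :: "'a::euclidean_space set \<Rightarrow> (nat \<Rightarrow> ('a \<times> 'a) measure \<times> ('a \<times> 'a) measure) \<Rightarrow> bool" where
  "support_measures C mu \<longleftrightarrow>
     (\<forall>i<DIM('a). signed_on (normal_bundle C) (mu i)) \<and>
     (\<forall>i<DIM('a). \<forall>B r. compact B \<and> r > 0 \<longrightarrow>
        tv_nn_int (mu i) (\<lambda>(x,u). indicator B x *
            ennreal (real_of_ereal (min (ereal r) (local_reach C x u)) ^ (DIM('a) - i))) < \<infinity>) \<and>
     (\<forall>f::'a \<Rightarrow> real. f \<in> borel_measurable borel \<and> bounded (range f) \<and> bounded {x. f x \<noteq> 0} \<longrightarrow>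
        (\<integral>y. indicator (UNIV - C) y * f y \<partial>lborel) =
        (\<Sum>i<DIM('a). omega (DIM('a) - i) *
           (LINT t:{0..}|lborel. sint (mu i) (\<lambda>(x,u). t ^ (DIM('a) - i - 1) *
               (if ereal t < local_reach C x u then 1 else 0) * f (x + t *\<^sub>R u)))))"

definition total_mass :: "('a::euclidean_space \<times> 'a) measure \<times> ('a \<times> 'a) measure \<Rightarrow> real" where
  "total_mass m = measure (fst m) UNIV - measure (snd m) UNIV"

end

theory Submission
  imports Defs
begin

text \<open>Write \<open>V\<close> for volume and \<open>\<mu>_i(C)\<close> for the support measures of a closed set \<open>C\<close>.
  The heart of the proof is the identity \<open>V(A_b) - V(A_a) = \<integral>_a^b 2 \<mu>_{d-1}(A_r) dr\<close> for
  \<open>0 < a \<le> b\<close>. It follows from the local Steiner formula of a smaller parallel set \<open>A_\<rho>\<close>, once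
  the integrand is identified by
  \<open>\<omega>_1 \<mu>_{d-1}(A_r) = \<Sum>_i \<omega>_{d-i} (r - \<rho>)^{d-1-i} \<mu>_i(A_\<rho>; reach > r - \<rho>)\<close>.
  This identity in turn comes from evaluating the Steiner formulas of \<open>A_\<rho>\<close> and of
  \<open>A_r = (A_\<rho>)_{r-\<rho>}\<close> on the same shells of \<open>A_r\<close>, restricted to points on normal segments
  longer than some small \<open>\<beta>\<close>: both results are polynomials in the shell radii, and their linear
  coefficients must agree. Since \<open>\<omega>_1 = 2\<close>, an integrated l'Hospital rule finally turns
  \<open>\<epsilon>^{s-(d-1)} \<mu>_{d-1}(A_\<epsilon>) \<rightarrow> L\<close> into \<open>\<epsilon>^{s-d} V(A_\<epsilon> - A) \<rightarrow> 2L/(d-s)\<close>.\<close>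

section \<open>Real analysis\<close>

lemma set_integral_sum:
  fixes f :: "'i \<Rightarrow> 'b \<Rightarrow> real"
  assumes "\<And>i. i \<in> I \<Longrightarrow> set_integrable M A (f i)"
  shows "set_integrable M A (\<lambda>x. \<Sum>i\<in>I. f i x)"
    and "(LINT x:A|M. (\<Sum>i\<in>I. f i x)) = (\<Sum>i\<in>I. LINT x:A|M. f i x)"
  using assms unfolding set_integrable_def set_lebesgue_integral_def scaleR_sum_right
  by (auto intro!: Bochner_Integration.integral_sum)

lemma set_integral_shift:
  fixes f :: "real \<Rightarrow> real"
  shows "set_integrable lborel {a - c<..b - c} (\<lambda>t. f (c + t)) \<longleftrightarrow> set_integrable lborel {a<..b} f"
    and "(LBINT t:{a - c<..b - c}. f (c + t)) = (LBINT r:{a<..b}. f r)"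
proof -
  have ind: "indicator {a - c<..b - c} t = (indicator {a<..b} (c + t) :: real)" for t
    by (simp split: split_indicator)
  show "set_integrable lborel {a - c<..b - c} (\<lambda>t. f (c + t)) \<longleftrightarrow> set_integrable lborel {a<..b} f"
    using lborel_integrable_real_affine_iff[of 1 "\<lambda>r. indicator {a<..b} r *\<^sub>R f r" c]
    unfolding set_integrable_def ind by simp
  show "(LBINT t:{a - c<..b - c}. f (c + t)) = (LBINT r:{a<..b}. f r)"
    using lborel_integral_real_affine[of 1 "\<lambda>r. indicator {a<..b} r *\<^sub>R f r" c]
    unfolding set_lebesgue_integral_def ind by simp
qed

lemma sum_set_integral_power_indicator:
  fixes a b :: real and w m :: "nat \<Rightarrow> real"
  assumes ab: "0 \<le> a" "a \<le> b"
  shows "(\<Sum>i<d. w i * (LINT t:{0..}|lborel. t ^ (d - i - 1) * indicator {a<..b} t * m i)) =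
         (\<Sum>i<d. w i * m i * (b ^ (d - i) - a ^ (d - i)) / real (d - i))"
proof (intro sum.cong refl)
  fix i assume "i \<in> {..<d}"
  then have n: "1 \<le> d - i" by auto
  have "(LINT t:{0..}|lborel. t ^ (d - i - 1) * indicator {a<..b} t * m i) = (LBINT t=a..b. m i * t ^ (d - i - 1))"
    unfolding interval_integral_Ioc[OF ab(2)] set_lebesgue_integral_def using ab
    by (intro Bochner_Integration.integral_cong refl) (auto split: split_indicator)
  also have "\<dots> = m i * b ^ (d - i) / (d - i) - m i * a ^ (d - i) / (d - i)"
  proof (rule interval_integral_FTC_finite)
    show "continuous_on {min a b..max a b} (\<lambda>t. m i * t ^ (d - i - 1))" by (intro continuous_intros)
    fix x
    show "((\<lambda>t. m i * t ^ (d - i) / (d - i)) has_vector_derivative m i * x ^ (d - i - 1))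
        (at x within {min a b..max a b})"
      unfolding has_real_derivative_iff_has_vector_derivative[symmetric]
      using n by (auto intro!: derivative_eq_intros)
  qed
  finally show "w i * (LINT t:{0..}|lborel. t ^ (d - i - 1) * indicator {a<..b} t * m i) =
      w i * m i * (b ^ (d - i) - a ^ (d - i)) / real (d - i)"
    by (simp add: diff_divide_distrib right_diff_distrib)
qed

lemma set_integral_powr:
  fixes a b q :: real
  assumes ab: "0 < a" "a \<le> b" and q: "0 < q"
  shows "set_integrable lborel {a<..b} (\<lambda>r. r powr (q - 1))"
    and "(LBINT r:{a<..b}. r powr (q - 1)) = (b powr q - a powr q) / q"
proof -
  have cont: "continuous_on {a..b} (\<lambda>r. r powr (q - 1))" using ab by (intro continuous_intros) auto
  show "set_integrable lborel {a<..b} (\<lambda>r. r powr (q - 1))"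
    using borel_integrable_atLeastAtMost'[OF cont] by (rule set_integrable_subset) auto
  have "(LBINT r:{a<..b}. r powr (q - 1)) = (LBINT r=a..b. r powr (q - 1))"
    by (rule interval_integral_Ioc[OF ab(2), symmetric])
  also have "\<dots> = b powr q / q - a powr q / q"
  proof (rule interval_integral_FTC_finite)
    show "continuous_on {min a b..max a b} (\<lambda>r. r powr (q - 1))" using cont ab by simp
    fix x assume "min a b \<le> x" "x \<le> max a b"
    then have "((\<lambda>r. r powr q / q) has_real_derivative q * x powr (q - of_nat 1) * 1 / q) (at x)"
      using ab by (intro DERIV_cdivide DERIV_fun_powr DERIV_ident) auto
    then show "((\<lambda>r. r powr q / q) has_vector_derivative x powr (q - 1)) (at x within {min a b..max a b})"
      using q by (simp add: has_real_derivative_iff_has_vector_derivative[symmetric] has_field_derivative_at_within)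
  qed
  finally show "(LBINT r:{a<..b}. r powr (q - 1)) = (b powr q - a powr q) / q"
    by (simp add: diff_divide_distrib)
qed

lemma set_integral_powr_approx:
  fixes g :: "real \<Rightarrow> real"
  assumes g: "set_integrable lborel {a<..b} g" and ab: "0 < a" "a \<le> b" and q: "0 < q"
    and approx: "\<And>r. a < r \<Longrightarrow> r \<le> b \<Longrightarrow> \<bar>g r - c * r powr (q - 1)\<bar> \<le> \<eta> * r powr (q - 1)"
  shows "\<bar>(LBINT r:{a<..b}. g r) - c * ((b powr q - a powr q) / q)\<bar> \<le> \<eta> * ((b powr q - a powr q) / q)"
proof -
  note p = set_integral_powr[OF ab q]
  have d: "set_integrable lborel {a<..b} (\<lambda>r. g r - c * r powr (q - 1))" using g p by simp
  have "\<bar>(LBINT r:{a<..b}. g r) - c * ((b powr q - a powr q) / q)\<bar> =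
      \<bar>LBINT r:{a<..b}. g r - c * r powr (q - 1)\<bar>"
    using g p by simp
  also have "\<dots> \<le> (LBINT r:{a<..b}. \<bar>g r - c * r powr (q - 1)\<bar>)"
    using set_integral_norm_bound[OF d] by simp
  also have "\<dots> \<le> (LBINT r:{a<..b}. \<eta> * r powr (q - 1))"
    using approx d p by (intro set_integral_mono set_integrable_abs) auto
  also have "\<dots> = \<eta> * ((b powr q - a powr q) / q)" using p by simp
  finally show ?thesis .
qed

lemma powr_increment_bound:
  fixes F g :: "real \<Rightarrow> real"
  assumes q: "0 < q" and e: "0 < e" and \<eta>: "0 \<le> \<eta>"
    and F: "\<And>a. 0 < a \<Longrightarrow> a < e \<Longrightarrow> set_integrable lborel {a<..e} g \<and> F e - F a = (LBINT r:{a<..e}. g r)"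
    and F0: "(F \<longlongrightarrow> F0) (at_right 0)"
    and approx: "\<And>r. 0 < r \<Longrightarrow> r \<le> e \<Longrightarrow> \<bar>g r - c * r powr (q - 1)\<bar> \<le> \<eta> * r powr (q - 1)"
  shows "\<bar>F e - F0 - c * (e powr q / q)\<bar> \<le> \<eta> * (e powr q / q)"
proof (rule tendsto_le[OF trivial_limit_at_right_real tendsto_const])
  have "((\<lambda>a. a powr q) \<longlongrightarrow> 0) (at_right 0)"
    using q by (intro tendsto_zero_powrI tendsto_ident_at)
      (auto simp: eventually_at_right_field intro: exI[of _ 1])
  then have "((\<lambda>a. \<bar>F e - F a - c * ((e powr q - a powr q) / q)\<bar>) \<longlongrightarrow>
      \<bar>F e - F0 - c * ((e powr q - 0) / q)\<bar>) (at_right 0)"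
    using q by (intro tendsto_rabs tendsto_diff tendsto_const tendsto_mult tendsto_divide F0) auto
  then show "((\<lambda>a. \<bar>F e - F a - c * ((e powr q - a powr q) / q)\<bar>) \<longlongrightarrow>
      \<bar>F e - F0 - c * (e powr q / q)\<bar>) (at_right 0)"
    by simp
  have "\<bar>F e - F a - c * ((e powr q - a powr q) / q)\<bar> \<le> \<eta> * (e powr q / q)" if a: "0 < a" "a < e" for a
  proof -
    have "\<bar>F e - F a - c * ((e powr q - a powr q) / q)\<bar> \<le> \<eta> * ((e powr q - a powr q) / q)"
      using F[OF a] set_integral_powr_approx[of a e g q c \<eta>] approx a q by auto
    also have "\<dots> \<le> \<eta> * (e powr q / q)" using \<eta> q a by (intro mult_left_mono divide_right_mono) auto
    finally show ?thesis .
  qed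
  then show "\<forall>\<^sub>F a in at_right 0. \<bar>F e - F a - c * ((e powr q - a powr q) / q)\<bar> \<le> \<eta> * (e powr q / q)"
    unfolding eventually_at_right_field using e by blast
qed

lemma tendsto_powr_increment:
  fixes F g :: "real \<Rightarrow> real"
  assumes q: "0 < q" and \<delta>: "0 < \<delta>"
    and F: "\<And>a b. 0 < a \<Longrightarrow> a \<le> b \<Longrightarrow> b < \<delta> \<Longrightarrow>
              set_integrable lborel {a<..b} g \<and> F b - F a = (LBINT r:{a<..b}. g r)"
    and F0: "(F \<longlongrightarrow> F0) (at_right 0)"
    and g: "((\<lambda>r. r powr (1 - q) * g r) \<longlongrightarrow> c) (at_right 0)"
  shows "((\<lambda>r. r powr (- q) * (F r - F0)) \<longlongrightarrow> c / q) (at_right 0)"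
  unfolding tendsto_iff
proof (intro allI impI)
  fix \<epsilon> :: real assume \<epsilon>: "0 < \<epsilon>"
  define \<eta> where "\<eta> = \<epsilon> * q / 2"
  have \<eta>: "0 < \<eta>" using \<epsilon> q by (simp add: \<eta>_def)
  obtain \<delta>' where \<delta>': "0 < \<delta>'" and near: "\<And>r. 0 < r \<Longrightarrow> r < \<delta>' \<Longrightarrow> \<bar>r powr (1 - q) * g r - c\<bar> < \<eta>"
    using g \<eta> unfolding tendsto_iff eventually_at_right_field dist_real_def by blast
  have approx: "\<bar>g r - c * r powr (q - 1)\<bar> \<le> \<eta> * r powr (q - 1)" if r: "0 < r" "r < \<delta>'" for r
  proof -
    have "r powr (1 - q) * r powr (q - 1) = 1" using r by (simp add: powr_add[symmetric])
    then have "g r - c * r powr (q - 1) = (r powr (1 - q) * g r - c) * r powr (q - 1)"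
      by (simp add: algebra_simps)
    then show ?thesis using near[OF r] r by (simp add: abs_mult)
  qed
  show "\<forall>\<^sub>F r in at_right 0. dist (r powr (- q) * (F r - F0)) (c / q) < \<epsilon>"
    unfolding eventually_at_right_field
  proof (intro exI[of _ "min \<delta> \<delta>'"] conjI allI impI)
    fix r assume r: "0 < r" "r < min \<delta> \<delta>'"
    have "r powr (- q) * (F r - F0) - c / q = (F r - F0 - c * (r powr q / q)) / r powr q"
      using r q by (simp add: powr_minus field_simps)
    then have "dist (r powr (- q) * (F r - F0)) (c / q) = \<bar>F r - F0 - c * (r powr q / q)\<bar> / r powr q"
      by (simp add: dist_real_def)
    also have "\<dots> \<le> \<eta> * (r powr q / q) / r powr q"
    proof (intro divide_right_mono powr_increment_bound[OF q _ _ _ F0])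
      show "0 < r" "0 \<le> \<eta>" "0 \<le> r powr q" using r \<eta> by auto
      show "set_integrable lborel {a<..r} g \<and> F r - F a = (LBINT t:{a<..r}. g t)" if "0 < a" "a < r" for a
        using F[of a r] that r by simp
      show "\<bar>g t - c * t powr (q - 1)\<bar> \<le> \<eta> * t powr (q - 1)" if "0 < t" "t \<le> r" for t
        using approx that r by simp
    qed
    also have "\<dots> = \<epsilon> / 2" using r q by (simp add: \<eta>_def)
    finally show "dist (r powr (- q) * (F r - F0)) (c / q) < \<epsilon>" using \<epsilon> by simp
  qed (use \<delta> \<delta>' in simp)
qed

text \<open>Both sides are increments \<open>P b - P a\<close> of polynomials, so the difference of their
  derivatives vanishes on \<open>]0, \<beta>[\<close> and, by continuity, at \<open>0\<close>, where only the linear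
  coefficient of the left-hand polynomial survives.\<close>

lemma power_increments_linear_coeff:
  fixes m m' :: "nat \<Rightarrow> real"
  assumes d: "1 \<le> d" and \<beta>: "0 < \<beta>"
    and eq: "\<And>a b. 0 < a \<Longrightarrow> a < b \<Longrightarrow> b < \<beta> \<Longrightarrow>
       (\<Sum>j<d. m j * (b ^ (d - j) - a ^ (d - j)) / real (d - j)) =
       (\<Sum>j<d. m' j * ((b + c) ^ (d - j) - (a + c) ^ (d - j)) / real (d - j))"
  shows "m (d - 1) = (\<Sum>j<d. m' j * c ^ (d - 1 - j))"
proof -
  define P where "P b = (\<Sum>j<d. m j * (b + 0) ^ (d - j) / real (d - j)) -
                        (\<Sum>j<d. m' j * (b + c) ^ (d - j) / real (d - j))" for b
  define P' where "P' b = (\<Sum>j<d. m j * (b + 0) ^ (d - j - 1)) - (\<Sum>j<d. m' j * (b + c) ^ (d - j - 1))" for b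
  have P_const: "P b = P a" if "0 < a" "a < b" "b < \<beta>" for a b
  proof -
    have "(\<Sum>j<d. k j * ((b + e) ^ (d - j) - (a + e) ^ (d - j)) / real (d - j)) =
      (\<Sum>j<d. k j * (b + e) ^ (d - j) / real (d - j)) - (\<Sum>j<d. k j * (a + e) ^ (d - j) / real (d - j))"
      for k :: "nat \<Rightarrow> real" and e
      unfolding sum_subtractf[symmetric] by (simp add: right_diff_distrib diff_divide_distrib)
    from this[of m 0] this[of m' c] show ?thesis using eq[OF that] unfolding P_def by simp
  qed
  have deriv: "((\<lambda>b. k * (b + e) ^ n / real n) has_real_derivative k * (x + e) ^ (n - 1)) (at x)"
    if "1 \<le> n" for k e x and n :: nat
    using that by (auto intro!: derivative_eq_intros)
  have P_deriv: "(P has_real_derivative P' x) (at x)" for x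
    unfolding P_def[abs_def] P'_def by (intro DERIV_diff DERIV_sum deriv) auto
  have "P' x = 0" if x: "0 < x" "x < \<beta>" for x
  proof (rule DERIV_local_const[OF P_deriv])
    show "0 < min x (\<beta> - x)" using x by simp
    show "\<forall>y. \<bar>x - y\<bar> < min x (\<beta> - x) \<longrightarrow> P x = P y"
    proof (intro allI impI)
      fix y assume "\<bar>x - y\<bar> < min x (\<beta> - x)"
      then have y: "0 < y" "y < \<beta>" by auto
      show "P x = P y"
        using P_const[OF x(1) _ y(2)] P_const[OF y(1) _ x(2)] by (cases x y rule: linorder_cases) auto
    qed
  qed
  then have "\<forall>\<^sub>F x in at_right 0. P' x = 0"
    unfolding eventually_at_right_field using \<beta> by blast
  then have "(P' \<longlongrightarrow> 0) (at_right 0)" by (rule tendsto_eventually)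
  moreover have "(P' \<longlongrightarrow> P' 0) (at_right 0)"
    unfolding P'_def by (intro tendsto_intros)
  ultimately have "P' 0 = 0" by (rule tendsto_unique[OF trivial_limit_at_right_real, symmetric])
  moreover have "(\<Sum>j<d. m j * (0 + 0) ^ (d - j - 1)) = (\<Sum>j<d. if j = d - 1 then m j else 0)"
    by (intro sum.cong refl) auto
  moreover have "(\<Sum>j<d. m' j * (0 + c) ^ (d - j - 1)) = (\<Sum>j<d. m' j * c ^ (d - 1 - j))"
    by (simp add: diff_commute)
  ultimately show ?thesis using d unfolding P'_def by simp
qed

lemma omega_1: "omega 1 = 2"
proof -
  have "(1 / 2 :: real) \<notin> \<int>\<^sub>\<le>\<^sub>0" using nonpos_Ints_nonpos[of "1 / 2 :: real"] by auto
  then have "Gamma (3 / 2 :: real) = sqrt pi / 2"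
    using Gamma_plus1[of "1 / 2 :: real"] by (simp add: Gamma_one_half_real)
  moreover have "omega 1 = sqrt pi / Gamma (3 / 2)" by (simp add: omega_def powr_half_sqrt)
  moreover have "sqrt pi / (sqrt pi / 2) = (2 :: real)" by simp
  ultimately show ?thesis by metis
qed

section \<open>Nearest points and parallel sets\<close>

lemma unique_nearest_infdist:
  assumes "unique_nearest C y x"
  shows "infdist y C = dist y x"
proof -
  have "x \<in> C" using assms unfolding unique_nearest_def by auto
  then show ?thesis
    using assms unfolding unique_nearest_def infdist_def
    by (auto intro!: antisym cINF_greatest cINF_lower2 simp: le_less)
qed

lemma unique_nearest_unique:
  assumes "unique_nearest C y x" "unique_nearest C y x'"
  shows "x = x'"
  using assms unfolding unique_nearest_def by (metis less_asym)

lemma proj_eqI: "unique_nearest C y x \<Longrightarrow> proj C y = x"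
  unfolding proj_def using unique_nearest_unique by blast

lemma infdist_geI:
  assumes "C \<noteq> {}" "\<And>z. z \<in> C \<Longrightarrow> d \<le> dist y z"
  shows "d \<le> infdist y C"
  unfolding infdist_def using assms by (auto intro!: cINF_greatest)

lemma unique_nearest_segment:
  fixes C :: "'a::euclidean_space set"
  assumes xC: "x \<in> C" and nearest: "dist (x + q *\<^sub>R u) x \<le> infdist (x + q *\<^sub>R u) C"
    and t: "0 \<le> t" "t < q"
  shows "unique_nearest C (x + t *\<^sub>R u) x"
  unfolding unique_nearest_def
proof (intro conjI ballI impI xC)
  fix w assume wC: "w \<in> C" and wx: "w \<noteq> x"
  define y where "y = x + t *\<^sub>R u"
  define z where "z = x + q *\<^sub>R u"
  have zy: "z - y = (q - t) *\<^sub>R u" by (simp add: z_def y_def algebra_simps)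
  show "dist y x < dist y w"
  proof (rule ccontr)
    assume "\<not> ?thesis"
    hence yw: "dist y w \<le> t * norm u" using t by (simp add: y_def dist_norm)
    have "q * norm u \<le> dist z w"
      using nearest infdist_le[OF wC, of z] t by (simp add: z_def dist_norm)
    moreover have "dist z w \<le> dist z y + dist y w" by (rule dist_triangle)
    moreover have dzy: "dist z y = (q - t) * norm u" using zy t by (simp add: dist_norm)
    ultimately have dyw: "dist y w = t * norm u" and tri: "dist z w = dist z y + dist y w"
      using yw by (auto simp: algebra_simps)
    \<comment> \<open>equality in the triangle inequality puts \<open>w\<close> on the ray from \<open>z\<close> through \<open>y\<close>, at the place of \<open>x\<close>\<close>
    have "norm (z - y) *\<^sub>R (y - w) = norm (y - w) *\<^sub>R (z - y)"
      using tri by (intro norm_triangle_eq[THEN iffD1]) (simp add: dist_norm)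
    hence "((q - t) * norm u) *\<^sub>R (y - w) = ((q - t) * norm u) *\<^sub>R (t *\<^sub>R u)"
      using dzy dyw zy t by (simp add: dist_norm mult_ac)
    moreover have "u \<noteq> 0" using dyw wx by (auto simp: y_def)
    then have "(q - t) * norm u \<noteq> 0" using t by simp
    ultimately have "y - w = t *\<^sub>R u" by (metis scaleR_cancel_left)
    then show False using wx by (simp add: y_def)
  qed
qed

lemma unique_nearest_shrink:
  fixes C :: "'a::euclidean_space set"
  assumes "unique_nearest C (x + t' *\<^sub>R u) x" "0 \<le> t" "t \<le> t'"
  shows "unique_nearest C (x + t *\<^sub>R u) x"
proof (cases "t = t'")
  case False
  have "x \<in> C" using assms unfolding unique_nearest_def by auto
  then show ?thesis
    using assms False unique_nearest_infdist[OF assms(1)] by (intro unique_nearest_segment[where q = t']) auto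
qed (use assms in simp)

lemma less_local_reach_iff:
  "ereal t < local_reach C x u \<longleftrightarrow> (\<exists>t'>t. 0 \<le> t' \<and> unique_nearest C (x + t' *\<^sub>R u) x)"
  unfolding local_reach_def by (auto simp: less_SUP_iff)

lemma normal_bundleD:
  fixes C :: "'a::euclidean_space set"
  assumes C: "closed C" "C \<noteq> {}" and N: "(x, u) \<in> normal_bundle C"
  shows "x \<in> C" "norm u = 1" "ereal 0 < local_reach C x u"
    "\<And>t. 0 < t \<Longrightarrow> ereal t < local_reach C x u \<Longrightarrow>
         unique_nearest C (x + t *\<^sub>R u) x \<and> infdist (x + t *\<^sub>R u) C = t"
proof -
  obtain y where y: "y \<in> Unp C" and x: "x = proj C y" and u: "u = (1 / infdist y C) *\<^sub>R (y - proj C y)"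
    using N unfolding normal_bundle_def by auto
  obtain x' where near: "unique_nearest C y x'" and yC: "y \<notin> C" using y unfolding Unp_def by auto
  have x': "x' = x" using x proj_eqI[OF near] by simp
  have D: "infdist y C = dist y x" using unique_nearest_infdist[OF near] x' by simp
  have D0: "infdist y C > 0" using infdist_pos_not_in_closed[OF C yC] .
  show "x \<in> C" using near x' unfolding unique_nearest_def by auto
  have u': "u = (1 / dist y x) *\<^sub>R (y - x)" using u x D by simp
  show nu: "norm u = 1" using u' D0 D by (simp add: dist_norm)
  have "y = x + dist y x *\<^sub>R u" using u' D0 D by simp
  then show "ereal 0 < local_reach C x u"
    unfolding less_local_reach_iff using D0 D near x' by (intro exI[of _ "dist y x"]) auto
  fix t assume t: "0 < t" "ereal t < local_reach C x u"
  then obtain t' where "t' > t" "unique_nearest C (x + t' *\<^sub>R u) x"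
    unfolding less_local_reach_iff by auto
  then have near_t: "unique_nearest C (x + t *\<^sub>R u) x"
    using unique_nearest_shrink[of C x t' u t] t by auto
  moreover have "infdist (x + t *\<^sub>R u) C = t"
    using unique_nearest_infdist[OF near_t] t nu by (simp add: dist_norm)
  ultimately show "unique_nearest C (x + t *\<^sub>R u) x \<and> infdist (x + t *\<^sub>R u) C = t" by simp
qed

lemma infdist_normal_bundle:
  fixes C :: "'a::euclidean_space set"
  assumes "closed C" "C \<noteq> {}" "(x, u) \<in> normal_bundle C" "0 \<le> t" "ereal t < local_reach C x u"
  shows "infdist (x + t *\<^sub>R u) C = t"
  using normal_bundleD[OF assms(1-3)] assms(4,5) by (cases "t = 0") auto

lemma closed_parset: "closed (parset C c)"
  unfolding parset_def by (intro closed_Collect_le continuous_intros)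

lemma compact_parset:
  fixes C :: "'a::euclidean_space set"
  assumes "compact C" "C \<noteq> {}"
  shows "compact (parset C c)"
proof -
  have "parset C c = {x. infdist x C \<le> max c 0 + 1} \<inter> parset C c" unfolding parset_def by auto
  also have "compact \<dots>"
    using assms by (intro compact_Int_closed compact_infdist_le closed_parset) auto
  finally show ?thesis .
qed

lemma subset_parset: "0 \<le> c \<Longrightarrow> C \<subseteq> parset C c"
  unfolding parset_def by auto

lemma parset_nonempty: "C \<noteq> {} \<Longrightarrow> 0 \<le> c \<Longrightarrow> parset C c \<noteq> {}"
  using subset_parset by blast

lemma parset_0:
  fixes C :: "'a::euclidean_space set"
  assumes "closed C" "C \<noteq> {}"
  shows "parset C 0 = C"
  unfolding parset_def using in_closed_iff_infdist_zero[OF assms] infdist_nonneg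
  by (auto intro: antisym)

lemma parset_segment_point:
  fixes C :: "'a::euclidean_space set"
  assumes "x \<in> C" "dist y x = D" "0 \<le> c" "c \<le> D" "0 < D"
  shows "x + (c / D) *\<^sub>R (y - x) \<in> parset C c" "dist y (x + (c / D) *\<^sub>R (y - x)) = D - c"
proof -
  have "dist (x + (c / D) *\<^sub>R (y - x)) x = c"
    using assms by (simp add: dist_norm norm_minus_commute)
  then show "x + (c / D) *\<^sub>R (y - x) \<in> parset C c"
    unfolding parset_def using infdist_le[OF assms(1)] by (metis mem_Collect_eq)
  have "y - (x + (c / D) *\<^sub>R (y - x)) = (1 - c / D) *\<^sub>R (y - x)" by (simp add: algebra_simps)
  then have "dist y (x + (c / D) *\<^sub>R (y - x)) = \<bar>1 - c / D\<bar> * D"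
    using assms by (simp add: dist_norm norm_minus_commute)
  also have "\<dots> = D - c" using assms by (simp add: field_simps)
  finally show "dist y (x + (c / D) *\<^sub>R (y - x)) = D - c" .
qed

lemma infdist_parset:
  fixes C :: "'a::euclidean_space set"
  assumes C: "compact C" "C \<noteq> {}" and c: "0 \<le> c" "c \<le> infdist y C"
  shows "infdist y (parset C c) = infdist y C - c"
proof (rule antisym)
  obtain x where x: "x \<in> C" "infdist y C = dist y x"
    using infdist_attains_inf[OF compact_imp_closed[OF C(1)] C(2)] by blast
  show "infdist y (parset C c) \<le> infdist y C - c"
  proof (cases "infdist y C = 0")
    case True
    then have "y \<in> parset C c" using c unfolding parset_def by simp
    then show ?thesis using True c by simp
  next
    case False
    then show ?thesis
      using parset_segment_point[OF x(1) x(2)[symmetric] c(1)] c x infdist_nonneg[of y C]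
      by (metis infdist_le order.not_eq_order_implies_strict)
  qed
  show "infdist y C - c \<le> infdist y (parset C c)"
  proof (rule infdist_geI[OF parset_nonempty[OF C(2) c(1)]])
    fix z assume "z \<in> parset C c"
    then show "infdist y C - c \<le> dist y z"
      using infdist_triangle[of y C z] unfolding parset_def by simp
  qed
qed

lemma parset_parset:
  fixes C :: "'a::euclidean_space set"
  assumes "compact C" "C \<noteq> {}" "0 \<le> a" "0 \<le> b"
  shows "parset (parset C a) b = parset C (a + b)"
proof -
  have "infdist y (parset C a) \<le> b \<longleftrightarrow> infdist y C \<le> a + b" for y
  proof (cases "infdist y C \<le> a")
    case True
    then have "y \<in> parset C a" unfolding parset_def by simp
    then show ?thesis using True assms by simp
  next
    case False
    then show ?thesis using infdist_parset[OF assms(1-3), of y] by linarith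
  qed
  then show ?thesis unfolding parset_def[of "parset C a"] by (auto simp: parset_def[of C])
qed

lemma parset_nearest_on_segment:
  fixes C :: "'a::euclidean_space set"
  assumes C: "compact C" "C \<noteq> {}" and c: "0 \<le> c" "c < D" and D: "infdist y C = D"
    and w: "w \<in> parset C c" "dist y w \<le> D - c"
  shows "\<exists>x\<in>C. dist y x = D \<and> w = x + (c / D) *\<^sub>R (y - x)"
proof -
  obtain x where x: "x \<in> C" "infdist w C = dist w x"
    using infdist_attains_inf[OF compact_imp_closed[OF C(1)] C(2)] by blast
  have "dist w x \<le> c" using w(1) x unfolding parset_def by simp
  moreover have "D \<le> dist y x" using infdist_le[OF x(1), of y] D by simp
  moreover have "dist y x \<le> dist y w + dist w x" by (rule dist_triangle)
  ultimately have yw: "dist y w = D - c" and wx: "dist w x = c" and yx: "dist y x = D"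
    using w(2) by linarith+
  have "norm ((y - w) + (w - x)) = norm (y - w) + norm (w - x)"
    using yw wx yx by (simp add: dist_norm)
  then have "norm (y - w) *\<^sub>R (w - x) = norm (w - x) *\<^sub>R (y - w)"
    by (rule norm_triangle_eq[THEN iffD1])
  then have "(D - c) *\<^sub>R (w - x) = c *\<^sub>R (y - w)" using yw wx by (simp add: dist_norm)
  then have "D *\<^sub>R w = D *\<^sub>R (x + (c / D) *\<^sub>R (y - x))"
    using c by (simp add: algebra_simps)
  then have "w = x + (c / D) *\<^sub>R (y - x)" using c by simp
  then show ?thesis using x(1) yx by blast
qed

lemma unique_nearest_parsetI:
  fixes C :: "'a::euclidean_space set"
  assumes C: "compact C" "C \<noteq> {}" and c: "0 \<le> c" "c < infdist y C" and near: "unique_nearest C y x"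
  shows "unique_nearest (parset C c) y (x + (c / infdist y C) *\<^sub>R (y - x))"
  unfolding unique_nearest_def
proof (intro conjI ballI impI)
  define D where "D = infdist y C"
  have x: "x \<in> C" "dist y x = D"
    using near unique_nearest_infdist[OF near] D_def unfolding unique_nearest_def by auto
  note p = parset_segment_point[OF x c(1) _ , folded D_def]
  show "x + (c / infdist y C) *\<^sub>R (y - x) \<in> parset C c" using p c D_def by simp
  fix w assume w: "w \<in> parset C c" "w \<noteq> x + (c / infdist y C) *\<^sub>R (y - x)"
  show "dist y (x + (c / infdist y C) *\<^sub>R (y - x)) < dist y w"
  proof (rule ccontr)
    assume "\<not> ?thesis"
    then obtain x' where "x' \<in> C" "dist y x' = D" "w = x' + (c / D) *\<^sub>R (y - x')"
      using parset_nearest_on_segment[OF C c(1) _ D_def[symmetric] w(1)] p c D_def by fastforce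
    moreover from this have "x' = x" using near x(2) unfolding unique_nearest_def by force
    ultimately show False using w D_def by simp
  qed
qed

lemma unique_nearest_parsetD:
  fixes C :: "'a::euclidean_space set"
  assumes C: "compact C" "C \<noteq> {}" and c: "0 \<le> c" "c < infdist y C"
    and near: "unique_nearest (parset C c) y z"
  shows "\<exists>x. unique_nearest C y x \<and> z = x + (c / infdist y C) *\<^sub>R (y - x)"
proof -
  define D where "D = infdist y C"
  define p where "p x = x + (c / D) *\<^sub>R (y - x)" for x
  have p: "p x \<in> parset C c" "dist y (p x) = D - c" if "x \<in> C" "dist y x = D" for x
    using parset_segment_point[OF that c(1)] c D_def p_def by auto
  have p_inj: "x = x'" if "p x = p x'" for x x'
  proof -
    have "(1 - c / D) *\<^sub>R x = (1 - c / D) *\<^sub>R x'" using that by (simp add: p_def algebra_simps)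
    moreover have "1 - c / D \<noteq> 0" using c D_def by simp
    ultimately show ?thesis by (metis scaleR_cancel_left)
  qed
  have z: "dist y z = D - c" using unique_nearest_infdist[OF near] infdist_parset[OF C c(1)] c D_def by simp
  have z_eq: "z = p x" if "x \<in> C" "dist y x = D" for x
    using near p[OF that] z unfolding unique_nearest_def by (metis less_irrefl)
  obtain x where x: "x \<in> C" "dist y x = D"
    using infdist_attains_inf[OF compact_imp_closed[OF C(1)] C(2)] D_def by metis
  have "unique_nearest C y x"
    unfolding unique_nearest_def
  proof (intro conjI ballI impI x(1))
    fix w assume "w \<in> C" "w \<noteq> x"
    then show "dist y x < dist y w"
      using z_eq[OF x] z_eq[of w] p_inj infdist_le[of w C y] D_def x(2) by force
  qed
  then show ?thesis using z_eq[OF x] D_def p_def by blast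
qed

lemma less_local_reach_parset_iff:
  fixes C :: "'a::euclidean_space set"
  assumes C: "compact C" "C \<noteq> {}" and c: "0 \<le> c" and u: "norm u = 1" and t: "0 \<le> t"
  shows "ereal t < local_reach (parset C c) (x + c *\<^sub>R u) u \<longleftrightarrow> ereal (t + c) < local_reach C x u"
  unfolding less_local_reach_iff
proof
  assume "\<exists>t'>t. 0 \<le> t' \<and> unique_nearest (parset C c) (x + c *\<^sub>R u + t' *\<^sub>R u) (x + c *\<^sub>R u)"
  then obtain t' where t': "t' > t" and near: "unique_nearest (parset C c) (x + c *\<^sub>R u + t' *\<^sub>R u) (x + c *\<^sub>R u)"
    by auto
  define y where "y = x + (c + t') *\<^sub>R u"
  have y: "x + c *\<^sub>R u + t' *\<^sub>R u = y" by (simp add: y_def algebra_simps)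
  have yc: "infdist y (parset C c) = t'"
    using unique_nearest_infdist[OF near] t' t u by (simp add: y[symmetric] dist_norm)
  have "y \<notin> parset C c" using yc t' t by auto
  then have c_less: "c < infdist y C" unfolding parset_def by simp
  then have D: "infdist y C = c + t'" using infdist_parset[OF C c, of y] yc by simp
  obtain x' where near': "unique_nearest C y x'" and eq: "x + c *\<^sub>R u = x' + (c / (c + t')) *\<^sub>R (y - x')"
    using unique_nearest_parsetD[OF C c c_less] near y D by auto
  define l where "l = c / (c + t')"
  have "l * (c + t') = c" using c t t' by (simp add: l_def)
  then have "x + c *\<^sub>R u = x' + l *\<^sub>R (x - x') + c *\<^sub>R u"
    using eq unfolding y_def l_def[symmetric]
    by (metis (no_types, lifting) add.assoc diff_add_eq scaleR_right_distrib scaleR_scaleR)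
  then have "(1 - l) *\<^sub>R (x - x') = 0" by (simp add: algebra_simps)
  moreover have "1 - l \<noteq> 0" using c t t' by (simp add: l_def)
  ultimately have "x' = x" by simp
  then show "\<exists>t'>t + c. 0 \<le> t' \<and> unique_nearest C (x + t' *\<^sub>R u) x"
    using near' t' t c by (intro exI[of _ "c + t'"]) (auto simp: y_def)
next
  assume "\<exists>t'>t + c. 0 \<le> t' \<and> unique_nearest C (x + t' *\<^sub>R u) x"
  then obtain t' where t': "t' > t + c" and near: "unique_nearest C (x + t' *\<^sub>R u) x" by auto
  define y where "y = x + t' *\<^sub>R u"
  have D: "infdist y C = t'" using unique_nearest_infdist[OF near] t' t c u by (simp add: y_def dist_norm)
  have "c < infdist y C" using D t' t by simp
  then have "unique_nearest (parset C c) y (x + (c / t') *\<^sub>R (y - x))"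
    using unique_nearest_parsetI[OF C c _ near[folded y_def]] D by simp
  moreover have "x + (c / t') *\<^sub>R (y - x) = x + c *\<^sub>R u" using t' t c by (simp add: y_def)
  moreover have "y = x + c *\<^sub>R u + (t' - c) *\<^sub>R u" by (simp add: y_def algebra_simps)
  ultimately show "\<exists>t''>t. 0 \<le> t'' \<and> unique_nearest (parset C c) (x + c *\<^sub>R u + t'' *\<^sub>R u) (x + c *\<^sub>R u)"
    using t' t by (intro exI[of _ "t' - c"]) auto
qed

lemma tendsto_measure_parset:
  fixes A :: "'a::euclidean_space set"
  assumes A: "compact A" "A \<noteq> {}"
  shows "((\<lambda>e. measure lborel (parset A e)) \<longlongrightarrow> measure lborel A) (at_right 0)"
proof (rule tendsto_at_right_sequentially[of 0 1])
  fix S :: "nat \<Rightarrow> real" assume S: "\<And>n. 0 < S n" "decseq S" "S \<longlonglongrightarrow> 0"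
  have "(\<Inter>n. parset A (S n)) = A"
  proof
    show "A \<subseteq> (\<Inter>n. parset A (S n))" using subset_parset S(1) less_imp_le by blast
    show "(\<Inter>n. parset A (S n)) \<subseteq> A"
    proof
      fix y assume "y \<in> (\<Inter>n. parset A (S n))"
      then have "infdist y A \<le> 0" unfolding parset_def by (intro LIMSEQ_le_const[OF S(3)]) auto
      then show "y \<in> A"
        using in_closed_iff_infdist_zero[OF compact_imp_closed[OF A(1)] A(2)] infdist_nonneg[of y A] by simp
    qed
  qed
  moreover have "(\<lambda>n. measure lborel (parset A (S n))) \<longlonglongrightarrow> measure lborel (\<Inter>n. parset A (S n))"
  proof (rule Lim_measure_decseq)
    show "range (\<lambda>n. parset A (S n)) \<subseteq> sets lborel" using closed_parset by (auto intro: borel_closed)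
    show "decseq (\<lambda>n. parset A (S n))"
      using S(2) unfolding decseq_def parset_def by (auto intro: order_trans)
    show "emeasure lborel (parset A (S n)) \<noteq> \<infinity>" for n
      using emeasure_bounded_finite[OF compact_imp_bounded[OF compact_parset[OF A]]] by (simp add: less_top)
  qed
  ultimately show "(\<lambda>n. measure lborel (parset A (S n))) \<longlonglongrightarrow> measure lborel A" by simp
qed simp
lemma measure_parset_Diff:
  fixes A :: "'a::euclidean_space set"
  assumes "compact A" "A \<noteq> {}" "0 \<le> r"
  shows "measure lborel (parset A r - A) = measure lborel (parset A r) - measure lborel A"
  using emeasure_bounded_finite[OF compact_imp_bounded[OF compact_parset[OF assms(1,2)]]] subset_parset assms
  by (intro measure_Diff) (auto intro: borel_closed closed_parset compact_imp_closed simp: less_top)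

section \<open>Normal pairs of large reach\<close>

definition nearest_pairs :: "'a::euclidean_space set \<Rightarrow> real \<Rightarrow> ('a \<times> 'a) set" where
  "nearest_pairs C q = {(x, u). x \<in> C \<and> dist (x + q *\<^sub>R u) x \<le> infdist (x + q *\<^sub>R u) C}"

definition reach_gt :: "'a::euclidean_space set \<Rightarrow> real \<Rightarrow> ('a \<times> 'a) set" where
  "reach_gt C t = {(x, u). ereal t < local_reach C x u}"

lemma reach_gt_antimono: "t \<le> t' \<Longrightarrow> reach_gt C t' \<subseteq> reach_gt C t"
  unfolding reach_gt_def by (auto intro: le_less_trans[of "ereal t" "ereal t'"])

lemma reach_gt_eq_Union:
  fixes C :: "'a::euclidean_space set"
  assumes "0 \<le> t"
  shows "reach_gt C t = (\<Union>q\<in>{q\<in>\<rat>. t < q}. nearest_pairs C q)"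
proof safe
  fix x u assume "(x, u) \<in> reach_gt C t"
  then obtain t' where t': "t < t'" and near: "unique_nearest C (x + t' *\<^sub>R u) x"
    unfolding reach_gt_def less_local_reach_iff by auto
  obtain q where q: "q \<in> \<rat>" "t < q" "q < t'" using Rats_dense_in_real t' by blast
  have "unique_nearest C (x + q *\<^sub>R u) x" using unique_nearest_shrink[OF near] q assms by auto
  then have "(x, u) \<in> nearest_pairs C q"
    unfolding nearest_pairs_def using unique_nearest_infdist unique_nearest_def by fastforce
  then show "(x, u) \<in> (\<Union>q\<in>{q\<in>\<rat>. t < q}. nearest_pairs C q)" using q by auto
next
  fix x u q assume q: "q \<in> \<rat>" "t < q" and "(x, u) \<in> nearest_pairs C q"
  then have "unique_nearest C (x + ((t + q) / 2) *\<^sub>R u) x"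
    unfolding nearest_pairs_def using assms by (intro unique_nearest_segment[where q = q]) auto
  then show "(x, u) \<in> reach_gt C t"
    unfolding reach_gt_def less_local_reach_iff using q assms by (auto intro!: exI[of _ "(t + q) / 2"])
qed

lemma closed_nearest_pairs:
  fixes C :: "'a::euclidean_space set"
  assumes "closed C"
  shows "closed (nearest_pairs C q)"
proof -
  have "nearest_pairs C q =
      (C \<times> UNIV) \<inter> {p. dist (fst p + q *\<^sub>R snd p) (fst p) \<le> infdist (fst p + q *\<^sub>R snd p) C}"
    unfolding nearest_pairs_def by auto
  also have "closed \<dots>"
    by (intro closed_Int closed_Times assms closed_UNIV closed_Collect_le continuous_intros)
  finally show ?thesis .
qed

lemma borel_reach_gt:
  fixes C :: "'a::euclidean_space set"
  assumes "closed C" "0 \<le> t"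
  shows "reach_gt C t \<in> sets borel"
  unfolding reach_gt_eq_Union[OF assms(2)]
  by (intro sets.countable_UN'' borel_closed closed_nearest_pairs assms countable_Collect countable_rat)

text \<open>A Borel set (a countable union of compact sets) through which a Borel function on the
  ambient space can see, along a normal segment shorter than \<open>b\<close>, whether the normal pair has
  reach greater than \<open>b\<close>; see \<open>reach_region_iff\<close>.\<close>

definition reach_region :: "'a::euclidean_space set \<Rightarrow> real \<Rightarrow> 'a set" where
  "reach_region C b = (\<Union>q\<in>{q\<in>\<rat>. b < q}.
     (\<lambda>(t, x, u). x + t *\<^sub>R u) ` ({0..q} \<times> (nearest_pairs C q \<inter> UNIV \<times> sphere 0 1)))"

lemma borel_reach_region:
  fixes C :: "'a::euclidean_space set"
  assumes "compact C"
  shows "reach_region C b \<in> sets borel"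
proof -
  have *: "nearest_pairs C q \<inter> UNIV \<times> sphere 0 1 = (C \<times> sphere 0 1) \<inter> nearest_pairs C q" for q
    unfolding nearest_pairs_def by auto
  have "compact ({0..q} \<times> (nearest_pairs C q \<inter> UNIV \<times> sphere 0 1))" for q
    unfolding * using assms
    by (intro compact_Times compact_Icc compact_Int_closed compact_sphere closed_nearest_pairs compact_imp_closed)
  then have "compact ((\<lambda>(t, x, u). x + t *\<^sub>R u) ` ({0..q} \<times> (nearest_pairs C q \<inter> UNIV \<times> sphere 0 1)))"
    for q :: real
    unfolding case_prod_unfold by (intro compact_continuous_image continuous_intros)
  then show ?thesis
    unfolding reach_region_def
    by (intro sets.countable_UN'' borel_closed compact_imp_closed countable_Collect countable_rat)
qed

lemma reach_region_iff:
  fixes C :: "'a::euclidean_space set"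
  assumes u: "norm u = 1" and t: "0 < t" "t < b" and near: "unique_nearest C (x + t *\<^sub>R u) x"
  shows "x + t *\<^sub>R u \<in> reach_region C b \<longleftrightarrow> (x, u) \<in> reach_gt C b"
proof
  have b: "0 \<le> b" using t by simp
  assume "(x, u) \<in> reach_gt C b"
  then obtain q where q: "q \<in> \<rat>" "b < q" "(x, u) \<in> nearest_pairs C q"
    unfolding reach_gt_eq_Union[OF b] by auto
  then have "(t, x, u) \<in> {0..q} \<times> (nearest_pairs C q \<inter> UNIV \<times> sphere 0 1)" using t u by auto
  then show "x + t *\<^sub>R u \<in> reach_region C b"
    unfolding reach_region_def using q by (auto intro!: bexI[of _ q] image_eqI[of _ _ "(t, x, u)"])
next
  define y where "y = x + t *\<^sub>R u"
  assume "x + t *\<^sub>R u \<in> reach_region C b"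
  then obtain q l x' u' where q: "q \<in> \<rat>" "b < q" and l: "0 \<le> l" "l \<le> q"
    and x': "x' \<in> C" "dist (x' + q *\<^sub>R u') x' \<le> infdist (x' + q *\<^sub>R u') C"
    and u': "norm u' = 1" and y: "y = x' + l *\<^sub>R u'"
    unfolding reach_region_def nearest_pairs_def y_def by auto
  have yC: "infdist y C = t" using unique_nearest_infdist[OF near] t u by (simp add: y_def dist_norm)
  have "t \<le> l" using infdist_le[OF x'(1), of y] yC y u' l by (simp add: dist_norm)
  moreover have "l \<le> t"
  proof -
    have "x' + q *\<^sub>R u' = y + (q - l) *\<^sub>R u'" by (simp add: y algebra_simps)
    then have "infdist (x' + q *\<^sub>R u') C \<le> t + (q - l)"
      using infdist_triangle[of "x' + q *\<^sub>R u'" C y] yC u' l by (simp add: dist_norm)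
    then show ?thesis using x'(2) u' l by (simp add: dist_norm)
  qed
  ultimately have lt: "l = t" by simp
  then have "unique_nearest C y x'"
    using unique_nearest_segment[OF x', of t] y lt t q(2) by simp
  then have "x' = x" using unique_nearest_unique near y_def by blast
  then have "u' = u" using y lt t by (simp add: y_def)
  then have "(x, u) \<in> nearest_pairs C q" using x' \<open>x' = x\<close> unfolding nearest_pairs_def by simp
  moreover have "0 \<le> b" using t by simp
  ultimately show "(x, u) \<in> reach_gt C b"
    using reach_gt_eq_Union q by blast
qed

section \<open>Support measures\<close>

definition smeasure :: "'b measure \<times> 'b measure \<Rightarrow> 'b set \<Rightarrow> real" where
  "smeasure m S = measure (fst m) S - measure (snd m) S"

lemma support_measures_signed_on:
  "support_measures C mu \<Longrightarrow> i < DIM('a) \<Longrightarrow> signed_on (normal_bundle C) (mu i)"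
  for C :: "'a::euclidean_space set"
  unfolding support_measures_def by blast

lemma integral_eq_measure_AE:
  fixes F :: "'b::topological_space \<Rightarrow> real"
  assumes M: "sets M = sets borel" "AE p in M. p \<in> N"
    and F: "F \<in> borel_measurable borel" "S \<in> sets borel" "\<And>p. p \<in> N \<Longrightarrow> F p = c * indicator S p"
  shows "integral\<^sup>L M F = c * measure M S"
proof -
  have "integral\<^sup>L M F = integral\<^sup>L M (\<lambda>p. c * indicator S p)"
  proof (rule integral_cong_AE)
    show "F \<in> borel_measurable M" using F(1) measurable_cong_sets[OF M(1) refl] by blast
    show "(\<lambda>p. c * indicator S p) \<in> borel_measurable M" using F(2) M(1) by measurable
    show "AE p in M. F p = c * indicator S p" using M(2) by eventually_elim (use F(3) in auto)
  qed
  also have "\<dots> = c * measure M S" using sets_eq_imp_space_eq[OF M(1)] by simp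
  finally show ?thesis .
qed

lemma sint_eq_smeasure:
  assumes "signed_on N m" "F \<in> borel_measurable borel" "S \<in> sets borel"
    "\<And>p. p \<in> N \<Longrightarrow> F p = c * indicator S p"
  shows "sint m F = c * smeasure m S"
  using integral_eq_measure_AE[of "fst m" N F S c] integral_eq_measure_AE[of "snd m" N F S c] assms
  unfolding signed_on_def sint_def smeasure_def by (simp add: algebra_simps)

lemma borel_measurable_normal_integrand:
  fixes C :: "'a::euclidean_space set" and f :: "'a \<Rightarrow> real"
  assumes "closed C" "0 \<le> t" "f \<in> borel_measurable borel"
  shows "(\<lambda>(x, u). t ^ k * (if ereal t < local_reach C x u then 1 else 0) * f (x + t *\<^sub>R u))
          \<in> borel_measurable borel"
proof -
  have "(\<lambda>(x, u). t ^ k * (if ereal t < local_reach C x u then 1 else 0) * f (x + t *\<^sub>R u))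
     = (\<lambda>p. t ^ k * indicator (reach_gt C t) p * f (fst p + t *\<^sub>R snd p))"
    by (auto simp: reach_gt_def fun_eq_iff split: split_indicator)
  moreover have "(\<lambda>p. fst p + t *\<^sub>R snd p :: 'a) \<in> borel_measurable borel"
    by (intro borel_measurable_continuous_onI continuous_intros)
  ultimately show ?thesis
    using borel_reach_gt[OF assms(1,2)] assms(3) by (simp add: measurable_compose[of _ _ borel f])
qed

lemma steiner_measure:
  fixes C R :: "'a::euclidean_space set" and g :: "real \<Rightarrow> real"
  assumes SM: "support_measures C mu" and C: "closed C"
    and R: "R \<in> sets borel" "bounded R" and S: "\<And>t. 0 \<le> t \<Longrightarrow> S t \<in> sets borel"
    and normal: "\<And>t x u. 0 \<le> t \<Longrightarrow> (x, u) \<in> normal_bundle C \<Longrightarrow>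
       (if ereal t < local_reach C x u then indicator R (x + t *\<^sub>R u) else 0) = g t * indicator (S t) (x, u)"
  shows "measure lborel (R - C) =
    (\<Sum>i<DIM('a). omega (DIM('a) - i) *
       (LINT t:{0..}|lborel. t ^ (DIM('a) - i - 1) * g t * smeasure (mu i) (S t)))"
proof -
  let ?f = "indicator R :: 'a \<Rightarrow> real"
  have f: "?f \<in> borel_measurable borel" "bounded (range ?f)" "bounded {x. ?f x \<noteq> 0}"
    using R by (auto intro: bounded_subset[of "{0, 1}"] simp: indicator_def)
  have "measure lborel (R - C) = integral\<^sup>L lborel (indicator (R - C) :: 'a \<Rightarrow> real)"
    by simp
  also have "\<dots> = (\<integral>y. indicator (UNIV - C) y * ?f y \<partial>lborel)"
    by (intro Bochner_Integration.integral_cong) (auto split: split_indicator)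
  also have "\<dots> = (\<Sum>i<DIM('a). omega (DIM('a) - i) *
      (LINT t:{0..}|lborel. sint (mu i) (\<lambda>(x, u). t ^ (DIM('a) - i - 1) *
          (if ereal t < local_reach C x u then 1 else 0) * ?f (x + t *\<^sub>R u))))"
    using SM f unfolding support_measures_def by blast
  also have "\<dots> = (\<Sum>i<DIM('a). omega (DIM('a) - i) *
      (LINT t:{0..}|lborel. t ^ (DIM('a) - i - 1) * g t * smeasure (mu i) (S t)))"
  proof (intro sum.cong refl arg_cong2[where f = "(*)"] set_lebesgue_integral_cong allI impI)
    fix i t assume i: "i \<in> {..<DIM('a)}" and t: "t \<in> {0::real..}"
    have pointwise: "t ^ (DIM('a) - i - 1) * (if ereal t < local_reach C x u then 1 else 0) * ?f (x + t *\<^sub>R u) =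
        t ^ (DIM('a) - i - 1) * g t * indicator (S t) (x, u)" if "(x, u) \<in> normal_bundle C" for x u
      using normal[OF _ that, of t] t by (cases "ereal t < local_reach C x u") (auto simp: mult.assoc)
    show "sint (mu i) (\<lambda>(x, u). t ^ (DIM('a) - i - 1) *
          (if ereal t < local_reach C x u then 1 else 0) * ?f (x + t *\<^sub>R u)) =
        t ^ (DIM('a) - i - 1) * g t * smeasure (mu i) (S t)"
    proof (rule sint_eq_smeasure[where N = "normal_bundle C"])
      show "signed_on (normal_bundle C) (mu i)" using support_measures_signed_on[OF SM] i by simp
      show "S t \<in> sets borel" using S t by simp
      show "(\<lambda>(x, u). t ^ (DIM('a) - i - 1) *
          (if ereal t < local_reach C x u then 1 else 0) * ?f (x + t *\<^sub>R u)) \<in> borel_measurable borel"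
        using borel_measurable_normal_integrand[OF C _ f(1)] t by simp
    qed (use pointwise in auto)
  qed simp
  finally show ?thesis .
qed

lemma emeasure_reach_gt_finite:
  fixes C :: "'a::euclidean_space set" and M :: "('a \<times> 'a) measure"
  assumes C: "closed C" "C \<noteq> {}" and \<beta>: "0 < \<beta>"
    and M: "sets M = sets borel" "AE p in M. p \<in> normal_bundle C"
    and fin: "(\<integral>\<^sup>+p. (\<lambda>(x, u). indicator C x *
        ennreal (real_of_ereal (min (ereal \<beta>) (local_reach C x u)) ^ k)) p \<partial>M) < \<infinity>"
  shows "emeasure M (reach_gt C \<beta>) < \<infinity>"
proof -
  have "ennreal (\<beta> ^ k) * emeasure M (reach_gt C \<beta>) = (\<integral>\<^sup>+p. ennreal (\<beta> ^ k) * indicator (reach_gt C \<beta>) p \<partial>M)"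
    using borel_reach_gt[OF C(1)] \<beta> M(1) by (simp add: nn_integral_cmult_indicator)
  also have "\<dots> \<le> (\<integral>\<^sup>+p. (\<lambda>(x, u). indicator C x *
        ennreal (real_of_ereal (min (ereal \<beta>) (local_reach C x u)) ^ k)) p \<partial>M)"
    using M(2)
  proof (intro nn_integral_mono_AE, eventually_elim)
    case (elim p)
    obtain x u where p: "p = (x, u)" by fastforce
    have "x \<in> C" using normal_bundleD(1)[OF C] elim p by blast
    then show ?case unfolding p reach_gt_def by (cases "ereal \<beta> < local_reach C x u") auto
  qed
  also have "\<dots> < \<infinity>" by (rule fin)
  finally show ?thesis using \<beta> by (auto simp: ennreal_mult_less_top)
qed

lemma support_measures_reach_gt_finite:
  fixes C :: "'a::euclidean_space set"
  assumes SM: "support_measures C mu" and C: "compact C" "C \<noteq> {}" and i: "i < DIM('a)" and \<beta>: "0 < \<beta>"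
  shows "emeasure (fst (mu i)) (reach_gt C \<beta>) < \<infinity>" "emeasure (snd (mu i)) (reach_gt C \<beta>) < \<infinity>"
proof -
  have "tv_nn_int (mu i) (\<lambda>(x, u). indicator C x *
      ennreal (real_of_ereal (min (ereal \<beta>) (local_reach C x u)) ^ (DIM('a) - i))) < \<infinity>"
    using SM C(1) i \<beta> unfolding support_measures_def by blast
  moreover have "signed_on (normal_bundle C) (mu i)" by (rule support_measures_signed_on[OF SM i])
  ultimately show "emeasure (fst (mu i)) (reach_gt C \<beta>) < \<infinity>" "emeasure (snd (mu i)) (reach_gt C \<beta>) < \<infinity>"
    by (intro emeasure_reach_gt_finite[OF compact_imp_closed[OF C(1)] C(2) \<beta>];
        auto simp: tv_nn_int_def signed_on_def)+
qed

lemma measure_reach_gt_tendsto: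
  fixes C :: "'a::euclidean_space set"
  assumes M: "sets M = sets borel" and C: "closed C" and t: "0 \<le> t"
    and fin: "emeasure M (reach_gt C t) < \<infinity>"
  shows "(\<lambda>n. measure M (reach_gt C (inverse (Suc n) + t))) \<longlonglongrightarrow> measure M (reach_gt C t)"
proof -
  have Un: "(\<Union>n. reach_gt C (inverse (Suc n) + t)) = reach_gt C t"
  proof
    show "(\<Union>n. reach_gt C (inverse (Suc n) + t)) \<subseteq> reach_gt C t"
      by (intro UN_least reach_gt_antimono) simp
    show "reach_gt C t \<subseteq> (\<Union>n. reach_gt C (inverse (Suc n) + t))"
    proof
      fix p assume "p \<in> reach_gt C t"
      then obtain r where r: "t < r" "ereal r < local_reach C (fst p) (snd p)"
        unfolding reach_gt_def using ereal_dense2 by fastforce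
      obtain n where "inverse (Suc n) < r - t" using r(1) reals_Archimedean[of "r - t"] by auto
      then have "p \<in> reach_gt C (inverse (Suc n) + t)"
        using r(2) unfolding reach_gt_def by (auto intro: less_trans[of _ "ereal r"])
      then show "p \<in> (\<Union>n. reach_gt C (inverse (Suc n) + t))" by blast
    qed
  qed
  have "(\<lambda>n. measure M (reach_gt C (inverse (Suc n) + t))) \<longlonglongrightarrow> measure M (\<Union>n. reach_gt C (inverse (Suc n) + t))"
  proof (rule Lim_measure_incseq)
    show "range (\<lambda>n. reach_gt C (inverse (Suc n) + t)) \<subseteq> sets M"
      using borel_reach_gt[OF C] t M by auto
    show "incseq (\<lambda>n. reach_gt C (inverse (Suc n) + t))"
      by (intro incseq_SucI reach_gt_antimono) (simp add: field_simps)
    show "emeasure M (\<Union>n. reach_gt C (inverse (Suc n) + t)) \<noteq> \<infinity>" using Un fin by simp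
  qed
  then show ?thesis unfolding Un .
qed

lemma smeasure_reach_gt_tendsto:
  fixes C :: "'a::euclidean_space set"
  assumes m: "signed_on N m" and C: "closed C" and t: "0 \<le> t"
    and fin: "emeasure (fst m) (reach_gt C t) < \<infinity>" "emeasure (snd m) (reach_gt C t) < \<infinity>"
  shows "(\<lambda>n. smeasure m (reach_gt C (inverse (Suc n) + t))) \<longlonglongrightarrow> smeasure m (reach_gt C t)"
  using m unfolding smeasure_def signed_on_def
  by (intro tendsto_diff measure_reach_gt_tendsto C t fin) auto

lemma smeasure_reach_gt_0:
  fixes C :: "'a::euclidean_space set"
  assumes C: "closed C" "C \<noteq> {}" and m: "signed_on (normal_bundle C) m"
  shows "smeasure m (reach_gt C 0) = total_mass m"
proof -
  have "measure M (reach_gt C 0) = measure M UNIV"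
    if M: "sets M = sets borel" "AE p in M. p \<in> normal_bundle C" for M :: "('a \<times> 'a) measure"
  proof (rule measure_eq_AE)
    show "AE p in M. p \<in> reach_gt C 0 \<longleftrightarrow> p \<in> UNIV"
      using M(2) by eventually_elim (use normal_bundleD(3)[OF C] in \<open>auto simp: reach_gt_def\<close>)
    show "reach_gt C 0 \<in> sets M" "UNIV \<in> sets M"
      using borel_reach_gt[OF C(1)] M(1) by auto
  qed
  then show ?thesis using m unfolding smeasure_def total_mass_def signed_on_def by auto
qed

lemma set_integrable_measure_reach_gt:
  fixes C :: "'a::euclidean_space set"
  assumes M: "sets M = sets borel" and C: "closed C" and a: "0 < a"
    and fin: "emeasure M (reach_gt C a) < \<infinity>"
  shows "set_integrable lborel {a<..b} (\<lambda>t. t ^ k * measure M (reach_gt C t))"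
proof -
  define h where "h t = measure M (reach_gt C (max t a))" for t
  have fmeas: "reach_gt C t \<in> fmeasurable M" if "a \<le> t" for t
  proof -
    have "reach_gt C t \<in> sets M" "reach_gt C a \<in> sets M"
      using borel_reach_gt[OF C, of t] borel_reach_gt[OF C, of a] that a M by auto
    moreover have "emeasure M (reach_gt C t) \<le> emeasure M (reach_gt C a)"
      using calculation reach_gt_antimono[OF that] by (intro emeasure_mono) auto
    ultimately show ?thesis using fin by (auto simp: fmeasurable_def)
  qed
  have h_antimono: "h t' \<le> h t" if "t \<le> t'" for t t'
    unfolding h_def using that reach_gt_antimono[of "max t a" "max t' a" C]
    by (intro measure_mono_fmeasurable fmeas fmeasurableD[OF fmeas]) auto
  have "mono (\<lambda>t. - h t)" using h_antimono by (auto intro: monoI)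
  then have "(\<lambda>t. - (- h t)) \<in> borel_measurable borel"
    by (intro borel_measurable_uminus borel_measurable_mono)
  then have h: "h \<in> borel_measurable borel" by simp
  have "integrable lborel (\<lambda>t. indicator {a<..b} t *\<^sub>R (t ^ k * h t))"
  proof (rule integrableI_bounded_set_indicator[where B = "b ^ k * h a"])
    show "(\<lambda>t. t ^ k * h t) \<in> borel_measurable lborel" using h by simp
    show "emeasure lborel {a<..b} < \<infinity>" by (cases "a \<le> b") auto
    show "AE t in lborel. t \<in> {a<..b} \<longrightarrow> norm (t ^ k * h t) \<le> b ^ k * h a"
      using a h_antimono[of a] by (intro AE_I2 impI) (auto simp: abs_mult h_def intro!: mult_mono power_mono)
  qed simp
  moreover have "(\<lambda>t. indicator {a<..b} t *\<^sub>R (t ^ k * h t)) =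
      (\<lambda>t. indicator {a<..b} t *\<^sub>R (t ^ k * measure M (reach_gt C t)))"
    by (auto simp: h_def fun_eq_iff split: split_indicator)
  ultimately show ?thesis unfolding set_integrable_def by simp
qed

section \<open>Support measures of parallel sets\<close>

lemma indicator_shell_along_normal:
  fixes C :: "'a::euclidean_space set"
  assumes C: "compact C" "C \<noteq> {}" and c: "0 \<le> c" and ab: "0 \<le> a" "b < \<beta>"
    and N: "(x, u) \<in> normal_bundle C" and t: "0 \<le> t" "ereal t < local_reach C x u"
  defines "D \<equiv> parset C c"
  shows "indicator ((parset D b - parset D a) \<inter> reach_region D \<beta>) (x + t *\<^sub>R u) =
    (indicator {a + c<..b + c} t * indicator (reach_gt C (\<beta> + c)) (x, u) :: real)"
proof -
  define y where "y = x + t *\<^sub>R u"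
  note normal = normal_bundleD[OF compact_imp_closed[OF C(1)] C(2) N]
  have yC: "infdist y C = t"
    unfolding y_def by (rule infdist_normal_bundle[OF compact_imp_closed[OF C(1)] C(2) N t])
  have yD: "infdist y D = t - c" if "c \<le> t"
    using infdist_parset[OF C c, of y] yC that unfolding D_def by simp
  show ?thesis
  proof (cases "a + c < t \<and> t \<le> b + c")
    case False
    have "y \<notin> parset D b - parset D a"
    proof
      assume y: "y \<in> parset D b - parset D a"
      have "c < t"
      proof (rule ccontr)
        assume "\<not> c < t"
        then have "y \<in> D" using yC unfolding D_def parset_def by simp
        then show False using y subset_parset[OF ab(1), of D] by auto
      qed
      then show False using y yD False unfolding parset_def by auto
    qed
    with False show ?thesis by (simp add: y_def)
  next
    case True
    then have ct: "c < t" "0 < t" "t - c < \<beta>" using ab c by auto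
    have shell: "y \<in> parset D b - parset D a" using yD True ct unfolding parset_def by auto
    have "unique_nearest C y x" using normal(4)[OF ct(2) t(2)] y_def by simp
    then have "unique_nearest D y (x + (c / t) *\<^sub>R (y - x))"
      using unique_nearest_parsetI[OF C c, of y] yC ct unfolding D_def by auto
    moreover have "x + (c / t) *\<^sub>R (y - x) = x + c *\<^sub>R u" using ct by (simp add: y_def)
    moreover have y': "y = (x + c *\<^sub>R u) + (t - c) *\<^sub>R u" by (simp add: y_def algebra_simps)
    ultimately have "y \<in> reach_region D \<beta> \<longleftrightarrow> (x + c *\<^sub>R u, u) \<in> reach_gt D \<beta>"
      using reach_region_iff[OF normal(2), of "t - c" \<beta> D "x + c *\<^sub>R u"] ct by simp
    also have "\<dots> \<longleftrightarrow> (x, u) \<in> reach_gt C (\<beta> + c)"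
      using less_local_reach_parset_iff[OF C c normal(2), of \<beta> x] ct unfolding reach_gt_def D_def by simp
    finally show ?thesis using True shell by (simp add: y_def indicator_def)
  qed
qed

lemma measure_shell_reach_region:
  fixes C :: "'a::euclidean_space set"
  assumes C: "compact C" "C \<noteq> {}" and c: "0 \<le> c" and SM: "support_measures C mu"
    and ab: "0 \<le> a" "a \<le> b" "b < \<beta>"
  defines "D \<equiv> parset C c"
  shows "measure lborel ((parset D b - parset D a) \<inter> reach_region D \<beta>) =
    (\<Sum>i<DIM('a). omega (DIM('a) - i) * smeasure (mu i) (reach_gt C (\<beta> + c)) *
       ((b + c) ^ (DIM('a) - i) - (a + c) ^ (DIM('a) - i)) / real (DIM('a) - i))"
proof -
  let ?R = "(parset D b - parset D a) \<inter> reach_region D \<beta>"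
  have D: "compact D" "D \<noteq> {}"
    unfolding D_def using compact_parset[OF C] parset_nonempty[OF C(2) c] by auto
  have "C \<subseteq> parset D a" using subset_parset[OF c] subset_parset[OF ab(1)] D_def by blast
  then have "?R = ?R - C" by auto
  also have "measure lborel (?R - C) = (\<Sum>i<DIM('a). omega (DIM('a) - i) *
      (LINT t:{0..}|lborel. t ^ (DIM('a) - i - 1) * indicator {a + c<..b + c} t *
         smeasure (mu i) (reach_gt C (\<beta> + c))))"
  proof (rule steiner_measure[OF SM compact_imp_closed[OF C(1)]])
    show "?R \<in> sets borel"
      by (intro sets.Int sets.Diff borel_closed closed_parset borel_reach_region D(1))
    show "bounded ?R"
      using compact_parset[OF D, of b] by (auto intro: bounded_subset compact_imp_bounded)
    show "reach_gt C (\<beta> + c) \<in> sets borel"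
      using borel_reach_gt[OF compact_imp_closed[OF C(1)]] ab c by simp
    fix t :: real and x u assume t: "0 \<le> t" and N: "(x, u) \<in> normal_bundle C"
    show "(if ereal t < local_reach C x u then indicator ?R (x + t *\<^sub>R u) else 0) =
        indicator {a + c<..b + c} t * (indicator (reach_gt C (\<beta> + c)) (x, u) :: real)"
    proof (cases "ereal t < local_reach C x u")
      case True
      then show ?thesis using indicator_shell_along_normal[OF C c ab(1) ab(3) N t True] D_def by simp
    next
      case False
      have "(x, u) \<notin> reach_gt C (\<beta> + c)" if "t \<le> b + c"
        using False that ab unfolding reach_gt_def by (auto simp: not_less intro: order.trans)
      then show ?thesis using False by (auto simp: indicator_def)
    qed
  qed
  also have "\<dots> = (\<Sum>i<DIM('a). omega (DIM('a) - i) * smeasure (mu i) (reach_gt C (\<beta> + c)) *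
       ((b + c) ^ (DIM('a) - i) - (a + c) ^ (DIM('a) - i)) / real (DIM('a) - i))"
    using ab c by (intro sum_set_integral_power_indicator) auto
  finally show ?thesis .
qed

text \<open>Evaluate the Steiner formulas of \<open>C\<close> and of \<open>C_c\<close> on the same shells of \<open>C_c\<close>, cut down
  to points on normal segments longer than \<open>\<beta>\<close> (\<open>measure_shell_reach_region\<close>), compare the
  linear coefficients of the resulting polynomials and let \<open>\<beta> \<rightarrow> 0\<close>.\<close>

lemma total_mass_parset:
  fixes C :: "'a::euclidean_space set"
  assumes C: "compact C" "C \<noteq> {}" and c: "0 < c"
    and SM: "support_measures C mu" and SMc: "support_measures (parset C c) nu"
    and fin: "emeasure (fst (nu (DIM('a) - 1))) UNIV < \<infinity>" "emeasure (snd (nu (DIM('a) - 1))) UNIV < \<infinity>"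
  shows "omega 1 * total_mass (nu (DIM('a) - 1)) =
    (\<Sum>i<DIM('a). omega (DIM('a) - i) * smeasure (mu i) (reach_gt C c) * c ^ (DIM('a) - 1 - i))"
proof -
  define D where "D = parset C c"
  have D: "compact D" "D \<noteq> {}"
    unfolding D_def using compact_parset[OF C] parset_nonempty[OF C(2)] c by auto
  have D0: "parset D 0 = D" using parset_0[OF compact_imp_closed[OF D(1)] D(2)] .
  have d: "1 \<le> DIM('a)" by (simp add: Suc_le_eq)
  have coeff: "omega 1 * smeasure (nu (DIM('a) - 1)) (reach_gt D \<beta>) =
      (\<Sum>i<DIM('a). omega (DIM('a) - i) * smeasure (mu i) (reach_gt C (\<beta> + c)) * c ^ (DIM('a) - 1 - i))"
    if \<beta>: "0 < \<beta>" for \<beta>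
  proof -
    have "omega (DIM('a) - (DIM('a) - 1)) * smeasure (nu (DIM('a) - 1)) (reach_gt D \<beta>) =
      (\<Sum>i<DIM('a). omega (DIM('a) - i) * smeasure (mu i) (reach_gt C (\<beta> + c)) * c ^ (DIM('a) - 1 - i))"
    proof (rule power_increments_linear_coeff[OF d \<beta>])
      fix a b assume ab: "0 < a" "a < b" "b < \<beta>"
      show "(\<Sum>i<DIM('a). omega (DIM('a) - i) * smeasure (nu i) (reach_gt D \<beta>) *
           (b ^ (DIM('a) - i) - a ^ (DIM('a) - i)) / real (DIM('a) - i)) =
        (\<Sum>i<DIM('a). omega (DIM('a) - i) * smeasure (mu i) (reach_gt C (\<beta> + c)) *
           ((b + c) ^ (DIM('a) - i) - (a + c) ^ (DIM('a) - i)) / real (DIM('a) - i))"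
        using measure_shell_reach_region[OF D order_refl SMc[folded D_def], of a b \<beta>, unfolded D0]
          measure_shell_reach_region[OF C _ SM, of c a b \<beta>, folded D_def] ab c
        by simp
    qed
    then show ?thesis using d by simp
  qed
  have inverse_Suc: "0 < inverse (real (Suc n))" for n by simp
  have nu: "signed_on (normal_bundle D) (nu (DIM('a) - 1))"
    using support_measures_signed_on[OF SMc[folded D_def]] by simp
  have "emeasure (fst (nu (DIM('a) - 1))) (reach_gt D 0) < \<infinity>"
    "emeasure (snd (nu (DIM('a) - 1))) (reach_gt D 0) < \<infinity>"
    using nu fin emeasure_mono[of "reach_gt D 0" UNIV "fst (nu (DIM('a) - 1))"]
      emeasure_mono[of "reach_gt D 0" UNIV "snd (nu (DIM('a) - 1))"]
    unfolding signed_on_def by (auto intro: le_less_trans)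
  then have "(\<lambda>n. omega 1 * smeasure (nu (DIM('a) - 1)) (reach_gt D (inverse (Suc n) + 0)))
      \<longlonglongrightarrow> omega 1 * smeasure (nu (DIM('a) - 1)) (reach_gt D 0)"
    by (intro tendsto_mult_left smeasure_reach_gt_tendsto[OF nu compact_imp_closed[OF D(1)] order_refl])
  moreover have "(\<lambda>n. omega 1 * smeasure (nu (DIM('a) - 1)) (reach_gt D (inverse (Suc n) + 0)))
      \<longlonglongrightarrow> (\<Sum>i<DIM('a). omega (DIM('a) - i) * smeasure (mu i) (reach_gt C c) * c ^ (DIM('a) - 1 - i))"
    unfolding add_0_right coeff[OF inverse_Suc]
    using support_measures_signed_on[OF SM] support_measures_reach_gt_finite[OF SM C _ c] c
    by (intro tendsto_sum tendsto_mult_right tendsto_mult_left smeasure_reach_gt_tendsto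
        compact_imp_closed[OF C(1)]) auto
  ultimately show ?thesis
    using smeasure_reach_gt_0[OF compact_imp_closed[OF D(1)] D(2) nu] LIMSEQ_unique by simp
qed

lemma measure_shell_eq_integral:
  fixes C :: "'a::euclidean_space set"
  assumes C: "compact C" "C \<noteq> {}" and SM: "support_measures C mu" and a: "0 \<le> a"
  shows "measure lborel (parset C b - parset C a) =
    (\<Sum>i<DIM('a). omega (DIM('a) - i) *
       (LBINT t:{a<..b}. t ^ (DIM('a) - i - 1) * smeasure (mu i) (reach_gt C t)))"
proof -
  have "parset C b - parset C a = (parset C b - parset C a) - C"
    using subset_parset[OF a] by auto
  also have "measure lborel \<dots> = (\<Sum>i<DIM('a). omega (DIM('a) - i) *
      (LINT t:{0..}|lborel. t ^ (DIM('a) - i - 1) * indicator {a<..b} t * smeasure (mu i) (reach_gt C t)))"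
  proof (rule steiner_measure[OF SM compact_imp_closed[OF C(1)]])
    show "parset C b - parset C a \<in> sets borel" by (intro sets.Diff borel_closed closed_parset)
    show "bounded (parset C b - parset C a)"
      using compact_parset[OF C, of b] by (auto intro: bounded_subset compact_imp_bounded)
    show "reach_gt C t \<in> sets borel" if "0 \<le> t" for t
      using borel_reach_gt[OF compact_imp_closed[OF C(1)] that] .
    fix t :: real and x u assume "0 \<le> t" "(x, u) \<in> normal_bundle C"
    then show "(if ereal t < local_reach C x u then indicator (parset C b - parset C a) (x + t *\<^sub>R u) else 0) =
        indicator {a<..b} t * (indicator (reach_gt C t) (x, u) :: real)"
      using infdist_normal_bundle[OF compact_imp_closed[OF C(1)] C(2)]
      by (auto simp: parset_def reach_gt_def split: split_indicator)
  qed
  also have "\<dots> = (\<Sum>i<DIM('a). omega (DIM('a) - i) *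
       (LBINT t:{a<..b}. t ^ (DIM('a) - i - 1) * smeasure (mu i) (reach_gt C t)))"
    unfolding set_lebesgue_integral_def using a
    by (intro sum.cong refl arg_cong2[where f = "(*)"] Bochner_Integration.integral_cong)
      (auto split: split_indicator)
  finally show ?thesis .
qed

text \<open>The Steiner formula of \<open>C\<close> writes the volume of a shell of \<open>C\<close> as an integral over the
  distance \<open>t\<close>; \<open>total_mass_parset\<close> identifies the integrand as \<open>2 \<mu>_{d-1}(C_t)\<close>.\<close>

lemma measure_shell_eq_integral_total_mass:
  fixes C :: "'a::euclidean_space set"
  assumes C: "compact C" "C \<noteq> {}" and a: "0 < a" and SM: "support_measures C mu"
    and SMt: "\<And>t. a < t \<Longrightarrow> t \<le> b \<Longrightarrow> support_measures (parset C t) (nu t)"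
    and fin: "\<And>t. a < t \<Longrightarrow> t \<le> b \<Longrightarrow> emeasure (fst (nu t (DIM('a) - 1))) UNIV < \<infinity>
                                        \<and> emeasure (snd (nu t (DIM('a) - 1))) UNIV < \<infinity>"
  shows "set_integrable lborel {a<..b} (\<lambda>t. 2 * total_mass (nu t (DIM('a) - 1)))"
    and "measure lborel (parset C b - parset C a) = (LBINT t:{a<..b}. 2 * total_mass (nu t (DIM('a) - 1)))"
proof -
  define g where "g i t = omega (DIM('a) - i) * (t ^ (DIM('a) - i - 1) * smeasure (mu i) (reach_gt C t))"
    for i t
  have g: "set_integrable lborel {a<..b} (g i)" if i: "i < DIM('a)" for i
  proof -
    have "sets (fst (mu i)) = sets borel" "sets (snd (mu i)) = sets borel"
      using support_measures_signed_on[OF SM i] unfolding signed_on_def by auto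
    then show ?thesis
      unfolding g_def smeasure_def right_diff_distrib using a support_measures_reach_gt_finite[OF SM C i a]
      by (intro set_integrable_mult_right set_integral_diff(1) set_integrable_measure_reach_gt
          compact_imp_closed[OF C(1)]) auto
  qed
  have sum_g: "(\<Sum>i<DIM('a). g i t) = 2 * total_mass (nu t (DIM('a) - 1))" if t: "t \<in> {a<..b}" for t
  proof -
    have "omega 1 * total_mass (nu t (DIM('a) - 1)) =
        (\<Sum>i<DIM('a). omega (DIM('a) - i) * smeasure (mu i) (reach_gt C t) * t ^ (DIM('a) - 1 - i))"
      using SMt fin t a by (intro total_mass_parset[OF C _ SM]) auto
    then show ?thesis unfolding g_def omega_1 by (simp add: diff_commute mult_ac)
  qed
  have "set_integrable lborel {a<..b} (\<lambda>t. \<Sum>i<DIM('a). g i t)"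
    by (rule set_integral_sum(1)) (use g in auto)
  moreover have "set_integrable lborel {a<..b} (\<lambda>t. \<Sum>i<DIM('a). g i t) \<longleftrightarrow>
      set_integrable lborel {a<..b} (\<lambda>t. 2 * total_mass (nu t (DIM('a) - 1)))"
    using sum_g by (intro set_integrable_cong) auto
  ultimately show "set_integrable lborel {a<..b} (\<lambda>t. 2 * total_mass (nu t (DIM('a) - 1)))" by blast
  have "measure lborel (parset C b - parset C a) = (\<Sum>i<DIM('a). LBINT t:{a<..b}. g i t)"
    using measure_shell_eq_integral[OF C SM, of a b] a by (simp add: g_def)
  also have "\<dots> = (LBINT t:{a<..b}. (\<Sum>i<DIM('a). g i t))"
    by (rule set_integral_sum(2)[symmetric]) (use g in auto)
  also have "\<dots> = (LBINT t:{a<..b}. 2 * total_mass (nu t (DIM('a) - 1)))"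
    using sum_g by (intro set_lebesgue_integral_cong) auto
  finally show "measure lborel (parset C b - parset C a) =
      (LBINT t:{a<..b}. 2 * total_mass (nu t (DIM('a) - 1)))" .
qed

lemma measure_parset_diff_eq_integral:
  fixes A :: "'a::euclidean_space set"
  assumes A: "compact A" "A \<noteq> {}" and ab: "0 < a" "a \<le> b"
    and SM: "\<And>e. 0 < e \<Longrightarrow> support_measures (parset A e) (mu e)"
    and fin: "\<And>e. a < e \<Longrightarrow> e \<le> b \<Longrightarrow> emeasure (fst (mu e (DIM('a) - 1))) UNIV < \<infinity>
                                        \<and> emeasure (snd (mu e (DIM('a) - 1))) UNIV < \<infinity>"
  shows "set_integrable lborel {a<..b} (\<lambda>r. 2 * total_mass (mu r (DIM('a) - 1)))"
    and "measure lborel (parset A b) - measure lborel (parset A a) =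
           (LBINT r:{a<..b}. 2 * total_mass (mu r (DIM('a) - 1)))"
proof -
  define \<rho> where "\<rho> = a / 2"
  define C where "C = parset A \<rho>"
  have \<rho>: "0 < \<rho>" "\<rho> < a" using ab by (auto simp: \<rho>_def)
  have C: "compact C" "C \<noteq> {}" using compact_parset[OF A] parset_nonempty[OF A(2)] \<rho> C_def by auto
  have parset_C: "parset C (r - \<rho>) = parset A r" if "\<rho> \<le> r" for r
    using parset_parset[OF A, of \<rho> "r - \<rho>"] \<rho> that C_def by simp
  have a': "0 < a - \<rho>" and SMC: "support_measures C (mu \<rho>)" using SM \<rho> C_def by auto
  have SMt: "support_measures (parset C t) (mu (\<rho> + t))" if "a - \<rho> < t" "t \<le> b - \<rho>" for t
    using SM[of "\<rho> + t"] parset_C[of "\<rho> + t"] that \<rho> by simp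
  have fin_t: "emeasure (fst (mu (\<rho> + t) (DIM('a) - 1))) UNIV < \<infinity>
      \<and> emeasure (snd (mu (\<rho> + t) (DIM('a) - 1))) UNIV < \<infinity>" if "a - \<rho> < t" "t \<le> b - \<rho>" for t
    using fin that by simp
  note shifted = measure_shell_eq_integral_total_mass[OF C a' SMC SMt fin_t]
  show "set_integrable lborel {a<..b} (\<lambda>r. 2 * total_mass (mu r (DIM('a) - 1)))"
    using shifted(1) set_integral_shift(1)[of a \<rho> b "\<lambda>r. 2 * total_mass (mu r (DIM('a) - 1))"] by simp
  have "measure lborel (parset A b) - measure lborel (parset A a) =
      measure lborel (parset C (b - \<rho>) - parset C (a - \<rho>))"
    using \<rho> ab parset_C[of a] parset_C[of b] closed_parset[of A a] closed_parset[of A b]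
      emeasure_bounded_finite[OF compact_imp_bounded[OF compact_parset[OF A, of b]]]
    by (subst measure_Diff) (auto simp: parset_def)
  also have "\<dots> = (LBINT t:{a - \<rho><..b - \<rho>}. 2 * total_mass (mu (\<rho> + t) (DIM('a) - 1)))"
    using shifted(2) by simp
  also have "\<dots> = (LBINT r:{a<..b}. 2 * total_mass (mu r (DIM('a) - 1)))"
    by (rule set_integral_shift(2))
  finally show "measure lborel (parset A b) - measure lborel (parset A a) =
      (LBINT r:{a<..b}. 2 * total_mass (mu r (DIM('a) - 1)))" .
qed

theorem mainTheorem5:
  fixes A :: "'a::euclidean_space set" and s L :: real
    and mu :: "real \<Rightarrow> nat \<Rightarrow> ('a \<times> 'a) measure \<times> ('a \<times> 'a) measure"
  assumes "DIM('a) \<ge> 2" and "compact A" and "A \<noteq> {}"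
    and "0 \<le> s" and "s < real DIM('a)"
    and "\<forall>e>0. support_measures (parset A e) (mu e)"
    and "\<forall>\<^sub>F e in at_right 0. emeasure (fst (mu e (DIM('a) - 1))) UNIV < \<infinity>
                              \<and> emeasure (snd (mu e (DIM('a) - 1))) UNIV < \<infinity>"
    and "L \<ge> 0"
    and "((\<lambda>e. e powr (s - real (DIM('a) - 1)) * total_mass (mu e (DIM('a) - 1))) \<longlongrightarrow> L) (at_right 0)"
  shows "((\<lambda>e. e powr (s - real DIM('a)) * measure lborel (parset A e - A))
           \<longlongrightarrow> 2 / (real DIM('a) - s) * L) (at_right 0)"
proof -
  obtain \<epsilon> where \<epsilon>: "0 < \<epsilon>" and fin: "\<And>e. 0 < e \<Longrightarrow> e < \<epsilon> \<Longrightarrow>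
      emeasure (fst (mu e (DIM('a) - 1))) UNIV < \<infinity> \<and> emeasure (snd (mu e (DIM('a) - 1))) UNIV < \<infinity>"
    using assms(7) unfolding eventually_at_right_field by blast
  have "1 - (real DIM('a) - s) = s - real (DIM('a) - 1)" by simp
  then have "((\<lambda>r. r powr (1 - (real DIM('a) - s)) * (2 * total_mass (mu r (DIM('a) - 1)))) \<longlongrightarrow> 2 * L)
      (at_right 0)"
    using tendsto_mult_left[OF assms(9), of 2] by (simp only: mult.left_commute)
  then have "((\<lambda>r. r powr (- (real DIM('a) - s)) * (measure lborel (parset A r) - measure lborel A))
      \<longlongrightarrow> 2 * L / (real DIM('a) - s)) (at_right 0)"
    using assms(5,6) fin measure_parset_diff_eq_integral[OF assms(2,3), of _ _ mu]
    by (intro tendsto_powr_increment[OF _ \<epsilon> _ tendsto_measure_parset[OF assms(2,3)]]) auto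
  moreover have "\<forall>\<^sub>F r in at_right 0. r powr (- (real DIM('a) - s)) *
      (measure lborel (parset A r) - measure lborel A) = r powr (s - real DIM('a)) * measure lborel (parset A r - A)"
    using measure_parset_Diff[OF assms(2,3)] unfolding eventually_at_right_field by (auto intro!: exI[of _ 1])
  ultimately show ?thesis unfolding times_divide_eq_left by (rule Lim_transform_eventually)
qed

end
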